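(* Let $G$ be a graph, let $x$ be a vertex of degree at least $3$, and suppose that $G$ contains $t\geq 2$ twin stems of length $2$ rooted at $x$, i.e. paths $x u_i u_i'$ ($1\le i\le t$) with all $u_i,u_i'$ distinct, each $u_i$ of degree $2$ (adjacent only to $x$ and $u_i'$) and each $u_i'$ of degree $1$. Then $Dist(G)\geq \psi(t)$.
   Context: $Dist(H)$ is the least $t$ such that $H$ has a labeling $V(H)\to\{1,\dots,t\}$ preserved by no non-identity automorphism of $H$. The function $\psi:\mathbb{N}\setminus\{1\}\to\mathbb{N}\setminus\{1\}$ is defined by $\psi(m)=k$, where $k$ is the least number (with $k\ge 2$) such that $m\leq 2\binom{k}{2}+k$. For example $\psi(19)=5$. *)

theory Defs
  imports Main
begin

definition simple_graph :: "'a set \<Rightarrow> ('a \<Rightarrow> 'a \<Rightarrow> bool) \<Rightarrow> bool" where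
  "simple_graph V E \<longleftrightarrow> finite V \<and> (\<forall>x y. E x y \<longrightarrow> x \<in> V \<and> y \<in> V)
     \<and> (\<forall>x y. E x y \<longrightarrow> E y x) \<and> (\<forall>x. \<not> E x x)"

definition degree :: "'a set \<Rightarrow> ('a \<Rightarrow> 'a \<Rightarrow> bool) \<Rightarrow> 'a \<Rightarrow> nat" where
  "degree V E x = card {y \<in> V. E x y}"

definition graph_aut :: "'a set \<Rightarrow> ('a \<Rightarrow> 'a \<Rightarrow> bool) \<Rightarrow> ('a \<Rightarrow> 'a) \<Rightarrow> bool" where
  "graph_aut V E f \<longleftrightarrow> bij_betw f V V \<and> (\<forall>x\<in>V. \<forall>y\<in>V. E (f x) (f y) \<longleftrightarrow> E x y)"

definition distinguishing :: "'a set \<Rightarrow> ('a \<Rightarrow> 'a \<Rightarrow> bool) \<Rightarrow> ('a \<Rightarrow> nat) \<Rightarrow> bool" where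
  "distinguishing V E c \<longleftrightarrow>
     (\<forall>f. graph_aut V E f \<and> (\<forall>v\<in>V. c (f v) = c v) \<longrightarrow> (\<forall>v\<in>V. f v = v))"

definition Dist :: "'a set \<Rightarrow> ('a \<Rightarrow> 'a \<Rightarrow> bool) \<Rightarrow> nat" where
  "Dist V E = (LEAST t. \<exists>c. (\<forall>v\<in>V. c v \<in> {1..t}) \<and> distinguishing V E c)"

definition psi :: "nat \<Rightarrow> nat" where
  "psi m = (LEAST k. 2 \<le> k \<and> m \<le> 2 * (k choose 2) + k)"

end

theory Submission
  imports Defs
begin

text \<open>A distinguishing labeling must give two twin stems \<open>x u u'\<close> different label pairs
  \<open>(c u, c u')\<close>, since otherwise swapping the two stems is a non-trivial automorphism
  preserving the labeling. With \<open>d = Dist G\<close> labels there are only \<open>d\<^sup>2 = 2 (d choose 2) + d\<close>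
  label pairs, so \<open>t \<le> 2 (d choose 2) + d\<close>, i.e. \<open>\<psi>(t) \<le> d\<close>.\<close>

definition pendant_path :: "'a set \<Rightarrow> ('a \<Rightarrow> 'a \<Rightarrow> bool) \<Rightarrow> 'a \<Rightarrow> 'a \<Rightarrow> 'a \<Rightarrow> bool" where
  "pendant_path V E x a a' \<longleftrightarrow> a \<in> V \<and> a' \<in> V
     \<and> (\<forall>y. E a y \<longleftrightarrow> y = x \<or> y = a') \<and> (\<forall>y. E a' y \<longleftrightarrow> y = a)"

lemma simple_graph_sym: "simple_graph V E \<Longrightarrow> E p q \<longleftrightarrow> E q p"
  and simple_graph_irrefl: "simple_graph V E \<Longrightarrow> \<not> E p p"
  and simple_graph_edge_in: "simple_graph V E \<Longrightarrow> E p q \<Longrightarrow> p \<in> V \<and> q \<in> V"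
  unfolding simple_graph_def by blast+

lemma neighbours_eq_if_card_eq_degree:
  assumes "simple_graph V E" and "finite A" and "A \<subseteq> {y \<in> V. E v y}"
    and "degree V E v = card A"
  shows "E v y \<longleftrightarrow> y \<in> A"
proof -
  have "finite {y \<in> V. E v y}" using assms(1) unfolding simple_graph_def by simp
  then have "A = {y \<in> V. E v y}"
    using assms(3,4) card_subset_eq unfolding degree_def by metis
  then show ?thesis using simple_graph_edge_in[OF assms(1)] by blast
qed

lemma pendant_pathI:
  assumes G: "simple_graph V E" and x: "x \<in> V" and "x \<noteq> a'"
    and a: "a \<in> V" "E x a" "degree V E a = 2"
    and a': "a' \<in> V" "E a a'" "degree V E a' = 1"
  shows "pendant_path V E x a a'"
proof -
  have "E a y \<longleftrightarrow> y \<in> {x, a'}" for y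
    using assms by (intro neighbours_eq_if_card_eq_degree) (auto simp: simple_graph_sym[OF G])
  moreover have "E a' y \<longleftrightarrow> y \<in> {a}" for y
    using assms by (intro neighbours_eq_if_card_eq_degree) (auto simp: simple_graph_sym[OF G])
  ultimately show ?thesis using a a' unfolding pendant_path_def by auto
qed

lemma graph_aut_if_involution:
  assumes "\<And>v. \<sigma> (\<sigma> v) = v" and "\<And>v. v \<in> V \<Longrightarrow> \<sigma> v \<in> V"
    and "\<And>p q. E p q \<Longrightarrow> E (\<sigma> p) (\<sigma> q)"
  shows "graph_aut V E \<sigma>"
proof -
  have "bij_betw \<sigma> V V"
    by (rule bij_betw_byWitness[where f'=\<sigma>]) (use assms(1,2) in auto)
  moreover have "E (\<sigma> p) (\<sigma> q) \<longleftrightarrow> E p q" for p q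
    using assms(3)[of "\<sigma> p" "\<sigma> q"] assms(3)[of p q] assms(1) by auto
  ultimately show ?thesis unfolding graph_aut_def by blast
qed

lemma graph_aut_swap_pendant_paths:
  assumes G: "simple_graph V E"
    and a: "pendant_path V E x a a'" and b: "pendant_path V E x b b'" and "a \<noteq> b"
  shows "graph_aut V E (\<lambda>v. if v = a then b else if v = b then a
                           else if v = a' then b' else if v = b' then a' else v)"
    (is "graph_aut V E ?\<sigma>")
proof -
  have Na: "E a y \<longleftrightarrow> y = x \<or> y = a'" "E y a \<longleftrightarrow> y = x \<or> y = a'"
    and Na': "E a' y \<longleftrightarrow> y = a" "E y a' \<longleftrightarrow> y = a" for y
    using a simple_graph_sym[OF G] unfolding pendant_path_def by blast+
  have Nb: "E b y \<longleftrightarrow> y = x \<or> y = b'" "E y b \<longleftrightarrow> y = x \<or> y = b'"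
    and Nb': "E b' y \<longleftrightarrow> y = b" "E y b' \<longleftrightarrow> y = b" for y
    using b simple_graph_sym[OF G] unfolding pendant_path_def by blast+
  have irr: "\<And>p. \<not> E p p" using simple_graph_irrefl[OF G] .
  have distinct: "a \<noteq> a'" "b \<noteq> b'" "a \<noteq> b'" "b \<noteq> a'" "a' \<noteq> b'"
    "x \<noteq> a" "x \<noteq> b" "x \<noteq> a'" "x \<noteq> b'"
    using Na Na' Nb Nb' irr \<open>a \<noteq> b\<close> by metis+
  show ?thesis
  proof (rule graph_aut_if_involution)
    show "?\<sigma> (?\<sigma> v) = v" for v using distinct \<open>a \<noteq> b\<close> by auto
    show "?\<sigma> v \<in> V" if "v \<in> V" for v
      using that a b unfolding pendant_path_def by auto
    show "E (?\<sigma> p) (?\<sigma> q)" if "E p q" for p q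
      using that distinct \<open>a \<noteq> b\<close> Na Na' Nb Nb' by (auto split: if_splits)
  qed
qed

lemma distinguishing_separates_pendant_paths:
  assumes "simple_graph V E" and "distinguishing V E c"
    and "pendant_path V E x a a'" and "pendant_path V E x b b'" and "a \<noteq> b"
  shows "(c a, c a') \<noteq> (c b, c b')"
proof
  assume same: "(c a, c a') = (c b, c b')"
  define \<sigma> where "\<sigma> v = (if v = a then b else if v = b then a
                          else if v = a' then b' else if v = b' then a' else v)" for v
  have "graph_aut V E \<sigma>"
    unfolding \<sigma>_def using graph_aut_swap_pendant_paths assms(1,3-5) .
  moreover have "\<forall>v\<in>V. c (\<sigma> v) = c v" using same unfolding \<sigma>_def by auto
  ultimately have "\<sigma> a = a"
    using assms(2,3) unfolding distinguishing_def pendant_path_def by blast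
  then show False using \<open>a \<noteq> b\<close> unfolding \<sigma>_def by simp
qed

lemma distinguishing_labeling_exists:
  assumes "finite V"
  shows "\<exists>c. (\<forall>v\<in>V. c v \<in> {1..card V}) \<and> distinguishing V E c"
proof -
  obtain f where f: "bij_betw f V {0..<card V}"
    using ex_bij_betw_finite_nat[OF assms] by blast
  have "\<forall>v\<in>V. Suc (f v) \<in> {1..card V}" using bij_betwE[OF f] by fastforce
  moreover have "distinguishing V E (\<lambda>v. Suc (f v))"
    unfolding distinguishing_def graph_aut_def
    using bij_betw_imp_inj_on[OF f] by (metis bij_betwE inj_onD nat.inject)
  ultimately show ?thesis by (intro exI[of _ "\<lambda>v. Suc (f v)"]) blast
qed

lemma Dist_labeling:
  assumes "simple_graph V E"
  obtains c where "\<forall>v\<in>V. c v \<in> {1..Dist V E}" and "distinguishing V E c"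
proof -
  have "finite V" using assms unfolding simple_graph_def by blast
  then have "\<exists>n c. (\<forall>v\<in>V. c v \<in> {1..n}) \<and> distinguishing V E c"
    using distinguishing_labeling_exists by blast
  then have "\<exists>c. (\<forall>v\<in>V. c v \<in> {1..Dist V E}) \<and> distinguishing V E c"
    unfolding Dist_def by (rule LeastI_ex)
  then show thesis using that by blast
qed

lemma two_mult_choose_two_plus: "2 * (d choose 2) + d = d * (d::nat)"
proof -
  have "even (d * (d - 1))" by (cases "even d") auto
  then have "2 * (d * (d - 1) div 2) = d * (d - 1)" by simp
  then show ?thesis by (simp add: choose_two) (cases d, auto)
qed

lemma psi_le:
  assumes "m \<le> k * k" and "2 \<le> k"
  shows "psi m \<le> k"
  unfolding psi_def
  by (rule Least_le) (use assms two_mult_choose_two_plus[of k] in simp)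

theorem lemma2p5:
  fixes V :: "'a set" and E :: "'a \<Rightarrow> 'a \<Rightarrow> bool" and x :: 'a
    and t :: nat and u u' :: "nat \<Rightarrow> 'a"
  assumes "simple_graph V E"
    and "x \<in> V" and "degree V E x \<ge> 3"
    and "t \<ge> 2"
    and "inj_on u {1..t}" and "inj_on u' {1..t}"
    and "\<forall>i\<in>{1..t}. \<forall>j\<in>{1..t}. u i \<noteq> u' j"
    and "\<forall>i\<in>{1..t}. u i \<in> V \<and> u' i \<in> V"
    and "\<forall>i\<in>{1..t}. E x (u i) \<and> E (u i) (u' i)"
    and "\<forall>i\<in>{1..t}. degree V E (u i) = 2 \<and> degree V E (u' i) = 1"
  shows "Dist V E \<ge> psi t"
proof -
  let ?d = "Dist V E"
  obtain c where c: "\<forall>v\<in>V. c v \<in> {1..?d}" and dc: "distinguishing V E c"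
    using Dist_labeling[OF assms(1)] by blast
  have stems: "pendant_path V E x (u i) (u' i)" if "i \<in> {1..t}" for i
    using assms(2,3,8-10) that by (intro pendant_pathI[OF assms(1)]) auto
  let ?labels = "\<lambda>i. (c (u i), c (u' i))"
  have "inj_on ?labels {1..t}"
    using distinguishing_separates_pendant_paths[OF assms(1) dc stems stems] assms(5)
    by (meson inj_onI inj_onD)
  moreover have "?labels ` {1..t} \<subseteq> {1..?d} \<times> {1..?d}" using c assms(8) by auto
  ultimately have t_le: "t \<le> ?d * ?d"
    using card_inj_on_le[of ?labels "{1..t}" "{1..?d} \<times> {1..?d}"]
    by (simp add: card_cartesian_product)
  have "2 \<le> ?d"
  proof (rule ccontr)
    assume "\<not> 2 \<le> ?d"
    then have "?d * ?d \<le> 1" by (cases ?d) auto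
    with t_le assms(4) show False by simp
  qed
  with t_le show ?thesis by (rule psi_le)
qed

end
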